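(* Let $d\ge3$ and $z\in[0,1)$. Then, as operators on $C(\mathbb S^{d-1})$, $$\mathcal U_z=\mathcal N_z\,\mathcal F\,\mathcal M_z,$$ where $\mathcal F=\mathcal U_0$ is the Funk--Radon transform.
   Context: $\mathbb S^{d-1}\subset\mathbb R^d$ is the unit sphere with its surface measure, and $\epsilon^1,\dots,\epsilon^d$ is the standard basis of $\mathbb R^d$. For $\xi\in\mathbb S^{d-1}$ set $\mathscr C_z^{\xi}=\{\eta\in\mathbb S^{d-1}:\langle\eta,\xi\rangle=z\xi_d\}$. This is a $(d-2)$-sphere of volume $V(\mathscr C_z^\xi)=|\mathbb S^{d-2}|(1-z^2\xi_d^2)^{(d-2)/2}$. For $f\in C(\mathbb S^{d-1})$ the spherical transform is $$\mathcal U_zf(\xi)=\frac{1}{V(\mathscr C_z^\xi)}\int_{\mathscr C_z^\xi}f\,\mathrm d\mathscr C_z^\xi,$$ the integral being against the $(d-2)$-dimensional surface measure. The maps $h_z,g_z:\mathbb S^{d-1}\to\mathbb S^{d-1}$ are $$h_z(\eta)=\sum_{i=1}^{d-1}\frac{\sqrt{1-z^2}}{1+z\eta_d}\eta_i\epsilon^i+\frac{z+\eta_d}{1+z\eta_d}\epsilon^d,$$ $$g_z(\xi)=(1-z^2\xi_d^2)^{-1/2}\Bigl(\sum_{i=1}^{d-1}\xi_i\epsilon^i+\sqrt{1-z^2}\xi_d\epsilon^d\Bigr).$$ The operators $\mathcal M_z,\mathcal N_z$ on $C(\mathbb S^{d-1})$ are $$\mathcal M_zf(\xi)=\Bigl(\frac{\sqrt{1-z^2}}{1+z\xi_d}\Bigr)^{d-2}f(h_z(\xi)),\qquad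 \mathcal N_zf(\xi)=(1-z^2\xi_d^2)^{-\frac{d-2}{2}}f(g_z(\xi)).$$ *)

theory Defs
  imports "HOL-Analysis.Analysis"
begin

text \<open>s-dimensional Hausdorff (outer) measure on a Euclidean space, with the
standard normalisation constant (volume of the unit ball of dimension s).\<close>

definition hausdorff_const :: "real \<Rightarrow> real" where
  "hausdorff_const s = pi powr (s / 2) / Gamma (s / 2 + 1) / 2 powr s"

definition hausdorff_approx :: "real \<Rightarrow> real \<Rightarrow> 'a::euclidean_space set \<Rightarrow> ennreal" where
  "hausdorff_approx s \<delta> A =
     (INF U \<in> {U :: nat \<Rightarrow> 'a set. A \<subseteq> (\<Union>i. U i) \<and>
                 (\<forall>i. bounded (U i) \<and> diameter (U i) \<le> \<delta>)}.
        (\<Sum>i. ennreal (hausdorff_const s * diameter (U i) powr s)))"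

definition hausdorff_outer :: "real \<Rightarrow> 'a::euclidean_space set \<Rightarrow> ennreal" where
  "hausdorff_outer s A = (SUP \<delta> \<in> {0<..}. hausdorff_approx s \<delta> A)"

definition hausdorff_measure :: "real \<Rightarrow> 'a::euclidean_space measure" where
  "hausdorff_measure s = measure_of UNIV (sets borel) (hausdorff_outer s)"

text \<open>Setting: vectors in R^d are of type real^'n with d = CARD('n); the
distinguished coordinate k plays the role of the last coordinate (index d).\<close>

definition circ :: "'n::finite \<Rightarrow> real \<Rightarrow> real^'n \<Rightarrow> (real^'n) set" where
  "circ k z \<xi> = {\<eta> \<in> sphere 0 1. \<eta> \<bullet> \<xi> = z * \<xi> $ k}"

definition sph_transform :: "'n::finite \<Rightarrow> real \<Rightarrow> (real^'n \<Rightarrow> real) \<Rightarrow> real^'n \<Rightarrow> real" where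
  "sph_transform k z f \<xi> =
     (let H = hausdorff_measure (real CARD('n) - 2) in
       (\<integral>\<eta>\<in>circ k z \<xi>. f \<eta> \<partial>H) / measure H (circ k z \<xi>))"

definition funk_radon :: "'n::finite \<Rightarrow> (real^'n \<Rightarrow> real) \<Rightarrow> real^'n \<Rightarrow> real" where
  "funk_radon k = sph_transform k 0"

definition hmap :: "'n::finite \<Rightarrow> real \<Rightarrow> real^'n \<Rightarrow> real^'n" where
  "hmap k z \<eta> = (\<chi> i. if i = k then (z + \<eta> $ k) / (1 + z * \<eta> $ k)
                      else sqrt (1 - z^2) / (1 + z * \<eta> $ k) * \<eta> $ i)"

definition gmap :: "'n::finite \<Rightarrow> real \<Rightarrow> real^'n \<Rightarrow> real^'n" where
  "gmap k z \<xi> = (1 - z^2 * (\<xi> $ k)^2) powr (-1/2) *\<^sub>R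
                  (\<chi> i. if i = k then sqrt (1 - z^2) * \<xi> $ k else \<xi> $ i)"

definition Mop :: "'n::finite \<Rightarrow> real \<Rightarrow> (real^'n \<Rightarrow> real) \<Rightarrow> real^'n \<Rightarrow> real" where
  "Mop k z f \<xi> = (sqrt (1 - z^2) / (1 + z * \<xi> $ k)) ^ (CARD('n) - 2) * f (hmap k z \<xi>)"

definition Nop :: "'n::finite \<Rightarrow> real \<Rightarrow> (real^'n \<Rightarrow> real) \<Rightarrow> real^'n \<Rightarrow> real" where
  "Nop k z f \<xi> = (1 - z^2 * (\<xi> $ k)^2) powr (- (real CARD('n) - 2) / 2) * f (gmap k z \<xi>)"

end

(*
  The map h_z is conformal on the sphere: |h_z x - h_z y|^2 = lam x * lam y * |x - y|^2 with
  lam x = sqrt (1 - z^2) / (1 + z x_d), and it maps the great sphere C_0 of g_z(xi) onto C_z of xi.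
  Hence the (d-2)-dimensional Hausdorff measure is transported with Jacobian lam^(d-2), which turns
  the integral of f over C_z of xi into the integral of M_z f over C_0 of g_z(xi). Moreover C_z of xi
  is a similar copy of that great sphere with ratio sqrt (1 - z^2 xi_d^2), so the two volumes differ
  by the factor that N_z supplies. The Jacobian formula follows by cutting the sphere into pieces on
  which lam is almost constant: there h_z is bi-Lipschitz with almost equal constants.
*)

theory Submission
  imports Defs
begin

section \<open>Hausdorff measure under Lipschitz maps\<close>

lemma hausdorff_const_nonneg: "0 \<le> s \<Longrightarrow> 0 \<le> hausdorff_const s"
  unfolding hausdorff_const_def
  by (intro divide_nonneg_pos divide_nonneg_nonneg) (auto intro!: Gamma_real_pos)

lemma ennreal_mult_INF:
  fixes c :: ennreal
  assumes "c < top" "A \<noteq> {}"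
  shows "c * (INF i\<in>A. F i) = (INF i\<in>A. c * F i)"
proof -
  have "continuous_on UNIV (\<lambda>x::ennreal. c * x)"
    by (rule ennreal_continuous_on_cmult[OF assms(1) continuous_on_id])
  then have "continuous (at_right (Inf (F ` A))) (\<lambda>x::ennreal. c * x)"
    by (simp add: continuous_on_eq_continuous_within continuous_at_imp_continuous_at_within)
  moreover have "mono (\<lambda>x::ennreal. c * x)" by (simp add: mono_def mult_left_mono)
  ultimately have "c * Inf (F ` A) = Inf ((\<lambda>x. c * x) ` F ` A)"
    using assms(2) by (intro continuous_at_Inf_mono) auto
  then show ?thesis by (simp add: image_comp)
qed

lemma lipschitz_image_bounded_diameter:
  fixes \<phi> :: "'a::metric_space \<Rightarrow> 'b::real_normed_vector"
  assumes L: "0 \<le> L" and lip: "\<And>x y. x \<in> A \<Longrightarrow> y \<in> A \<Longrightarrow> dist (\<phi> x) (\<phi> y) \<le> L * dist x y"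
    and W: "W \<subseteq> A" "bounded W"
  shows "bounded (\<phi> ` W)" "diameter (\<phi> ` W) \<le> L * diameter W"
proof -
  have bound: "dist (\<phi> x) (\<phi> y) \<le> L * diameter W" if "x \<in> W" "y \<in> W" for x y
  proof -
    have "dist (\<phi> x) (\<phi> y) \<le> L * dist x y" using lip W that by auto
    also have "\<dots> \<le> L * diameter W"
      using diameter_bounded_bound[OF W(2) that] L by (rule mult_left_mono)
    finally show ?thesis .
  qed
  show "bounded (\<phi> ` W)"
  proof (cases "W = {}")
    case False
    then obtain w where "w \<in> W" by blast
    then show ?thesis unfolding bounded_def using bound by blast
  qed simp
  show "diameter (\<phi> ` W) \<le> L * diameter W"
    using bound L by (cases "W = {}") (auto intro!: diameter_le simp: dist_norm)
qed

lemma hausdorff_approx_lipschitz_image_cover: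
  fixes \<phi> :: "'a::euclidean_space \<Rightarrow> 'b::euclidean_space"
  assumes s: "0 < s" and L: "0 < L"
    and lip: "\<And>x y. x \<in> A \<Longrightarrow> y \<in> A \<Longrightarrow> dist (\<phi> x) (\<phi> y) \<le> L * dist x y"
    and U: "A \<subseteq> (\<Union>i. U i)" "\<And>i. bounded (U i)" "\<And>i. diameter (U i) \<le> \<delta>"
  shows "hausdorff_approx s (L * \<delta>) (\<phi> ` A)
    \<le> ennreal (L powr s) * (\<Sum>i. ennreal (hausdorff_const s * diameter (U i) powr s))"
proof -
  define V where "V i = \<phi> ` (U i \<inter> A)" for i
  have V: "bounded (V i)" "diameter (V i) \<le> L * diameter (U i)" for i
  proof -
    have "bounded (U i \<inter> A)" using U(2) by (auto intro: bounded_subset)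
    then have "bounded (V i)" "diameter (V i) \<le> L * diameter (U i \<inter> A)"
      unfolding V_def using lipschitz_image_bounded_diameter[OF _ lip] L by auto
    moreover have "diameter (U i \<inter> A) \<le> diameter (U i)"
      using U(2) by (intro diameter_subset) auto
    ultimately show "bounded (V i)" "diameter (V i) \<le> L * diameter (U i)"
      using L by (meson order_trans mult_left_mono less_imp_le)+
  qed
  have "\<phi> ` A \<subseteq> (\<Union>i. V i)" using U(1) unfolding V_def by blast
  moreover have "diameter (V i) \<le> L * \<delta>" for i
    using U(3)[of i] V(2)[of i] L by (meson order_trans mult_left_mono less_imp_le)
  ultimately have "V \<in> {V. \<phi> ` A \<subseteq> (\<Union>i. V i) \<and> (\<forall>i. bounded (V i) \<and> diameter (V i) \<le> L * \<delta>)}"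
    using V(1) by blast
  then have "hausdorff_approx s (L * \<delta>) (\<phi> ` A)
      \<le> (\<Sum>i. ennreal (hausdorff_const s * diameter (V i) powr s))"
    unfolding hausdorff_approx_def by (rule INF_lower)
  also have "\<dots> \<le> (\<Sum>i. ennreal (L powr s) * ennreal (hausdorff_const s * diameter (U i) powr s))"
  proof (intro suminf_le summableI)
    fix i
    have "diameter (V i) powr s \<le> (L * diameter (U i)) powr s"
      using V s by (intro powr_mono2) (auto simp: diameter_ge_0)
    also have "\<dots> = L powr s * diameter (U i) powr s"
      using L by (simp add: powr_mult diameter_ge_0)
    finally have "hausdorff_const s * diameter (V i) powr s
        \<le> L powr s * (hausdorff_const s * diameter (U i) powr s)"
      using hausdorff_const_nonneg[of s] s by (simp add: mult_left_mono mult.left_commute)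
    then show "ennreal (hausdorff_const s * diameter (V i) powr s)
        \<le> ennreal (L powr s) * ennreal (hausdorff_const s * diameter (U i) powr s)"
      by (simp add: ennreal_leI flip: ennreal_mult')
  qed
  also have "\<dots> = ennreal (L powr s) * (\<Sum>i. ennreal (hausdorff_const s * diameter (U i) powr s))"
    by simp
  finally show ?thesis .
qed

lemma hausdorff_approx_lipschitz_image:
  fixes \<phi> :: "'a::euclidean_space \<Rightarrow> 'b::euclidean_space"
  assumes s: "0 < s" and L: "0 < L"
    and lip: "\<And>x y. x \<in> A \<Longrightarrow> y \<in> A \<Longrightarrow> dist (\<phi> x) (\<phi> y) \<le> L * dist x y"
  shows "hausdorff_approx s (L * \<delta>) (\<phi> ` A) \<le> ennreal (L powr s) * hausdorff_approx s \<delta> A"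
proof -
  define C where "C = {U :: nat \<Rightarrow> 'a set. A \<subseteq> (\<Union>i. U i) \<and>
                 (\<forall>i. bounded (U i) \<and> diameter (U i) \<le> \<delta>)}"
  define cost where "cost U = (\<Sum>i. ennreal (hausdorff_const s * diameter (U i) powr s))"
    for U :: "nat \<Rightarrow> 'a set"
  have approx_A: "hausdorff_approx s \<delta> A = (INF U\<in>C. cost U)"
    unfolding hausdorff_approx_def C_def cost_def ..
  show ?thesis
  proof (cases "C = {}")
    case True
    then show ?thesis using L by (simp add: approx_A ennreal_mult_top)
  next
    case False
    have "hausdorff_approx s (L * \<delta>) (\<phi> ` A) \<le> (INF U\<in>C. ennreal (L powr s) * cost U)"
      unfolding C_def cost_def
      by (rule INF_greatest) (use hausdorff_approx_lipschitz_image_cover[OF s L lip] in blast)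
    also have "\<dots> = ennreal (L powr s) * hausdorff_approx s \<delta> A"
      using False by (simp add: approx_A ennreal_mult_INF)
    finally show ?thesis .
  qed
qed

lemma hausdorff_outer_lipschitz_image:
  fixes \<phi> :: "'a::euclidean_space \<Rightarrow> 'b::euclidean_space"
  assumes s: "0 < s" and L: "0 < L"
    and lip: "\<And>x y. x \<in> A \<Longrightarrow> y \<in> A \<Longrightarrow> dist (\<phi> x) (\<phi> y) \<le> L * dist x y"
  shows "hausdorff_outer s (\<phi> ` A) \<le> ennreal (L powr s) * hausdorff_outer s A"
  unfolding hausdorff_outer_def
proof (rule SUP_least)
  fix \<delta> :: real assume \<delta>: "\<delta> \<in> {0<..}"
  have "hausdorff_approx s \<delta> (\<phi> ` A) \<le> ennreal (L powr s) * hausdorff_approx s (\<delta> / L) A"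
    using hausdorff_approx_lipschitz_image[OF s L lip, where \<delta> = "\<delta> / L"] L by simp
  also have "\<dots> \<le> ennreal (L powr s) * (SUP \<delta>\<in>{0<..}. hausdorff_approx s \<delta> A)"
    using \<delta> L by (intro mult_left_mono SUP_upper) auto
  finally show "hausdorff_approx s \<delta> (\<phi> ` A) \<le> ennreal (L powr s) * (SUP \<delta>\<in>{0<..}. hausdorff_approx s \<delta> A)" .
qed

lemma hausdorff_outer_expanding_image:
  fixes \<phi> :: "'a::euclidean_space \<Rightarrow> 'b::euclidean_space"
  assumes s: "0 < s" and L: "0 < L"
    and expand: "\<And>x y. x \<in> A \<Longrightarrow> y \<in> A \<Longrightarrow> L * dist x y \<le> dist (\<phi> x) (\<phi> y)"
  shows "ennreal (L powr s) * hausdorff_outer s A \<le> hausdorff_outer s (\<phi> ` A)"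
proof -
  have inj: "inj_on \<phi> A"
  proof (rule inj_onI)
    fix x y assume "x \<in> A" "y \<in> A" "\<phi> x = \<phi> y"
    then have "L * dist x y \<le> 0" using expand[of x y] by simp
    then show "x = y" using L by (simp add: mult_le_0_iff)
  qed
  define \<psi> where "\<psi> = inv_into A \<phi>"
  have "dist (\<psi> u) (\<psi> v) \<le> (1 / L) * dist u v" if uv: "u \<in> \<phi> ` A" "v \<in> \<phi> ` A" for u v
  proof -
    obtain x y where "x \<in> A" "y \<in> A" "u = \<phi> x" "v = \<phi> y" using uv by blast
    then show ?thesis
      using expand[of x y] inj L by (simp add: \<psi>_def pos_le_divide_eq mult.commute)
  qed
  then have "hausdorff_outer s (\<psi> ` \<phi> ` A) \<le> ennreal ((1 / L) powr s) * hausdorff_outer s (\<phi> ` A)"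
    using L by (intro hausdorff_outer_lipschitz_image[OF s]) auto
  moreover have "\<psi> ` \<phi> ` A = A" unfolding \<psi>_def using inj by (rule inv_into_image_cancel) simp
  ultimately have "ennreal (L powr s) * hausdorff_outer s A
      \<le> ennreal (L powr s) * (ennreal ((1 / L) powr s) * hausdorff_outer s (\<phi> ` A))"
    by (simp add: mult_left_mono)
  also have "\<dots> = ennreal (L powr s * (1 / L) powr s) * hausdorff_outer s (\<phi> ` A)"
    by (simp add: ennreal_mult mult.assoc)
  also have "L powr s * (1 / L) powr s = 1"
    using L by (simp add: powr_divide powr_minus_divide)
  finally show ?thesis by simp
qed

lemma hausdorff_outer_similar_image:
  fixes \<phi> :: "'a::euclidean_space \<Rightarrow> 'b::euclidean_space"
  assumes "0 < s" "0 < r" "\<And>x y. x \<in> A \<Longrightarrow> y \<in> A \<Longrightarrow> dist (\<phi> x) (\<phi> y) = r * dist x y"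
  shows "hausdorff_outer s (\<phi> ` A) = ennreal (r powr s) * hausdorff_outer s A"
  using hausdorff_outer_lipschitz_image[of s r A \<phi>] hausdorff_outer_expanding_image[of s r A \<phi>] assms
  by (intro antisym) auto

lemma sets_hausdorff_measure [simp, measurable_cong]:
  "sets (hausdorff_measure s :: 'a::euclidean_space measure) = sets borel"
  unfolding hausdorff_measure_def
  by (metis sets.sigma_sets_eq space_borel sets_measure_of sets.space_closed)

lemma emeasure_hausdorff_measure_conv:
  "emeasure (hausdorff_measure s :: 'a::euclidean_space measure) B =
     (if B \<in> sets borel \<and> measure_space UNIV (sets borel) (hausdorff_outer s :: 'a set \<Rightarrow> ennreal)
      then hausdorff_outer s B else 0)"
proof -
  have "sigma_sets UNIV (sets (borel :: 'a measure)) = sets borel"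
    by (metis sets.sigma_sets_eq space_borel)
  then show ?thesis unfolding hausdorff_measure_def emeasure_measure_of_conv by simp
qed

lemma emeasure_hausdorff_measure:
  assumes "measure_space UNIV (sets borel) (hausdorff_outer s :: 'a::euclidean_space set \<Rightarrow> ennreal)"
    and "B \<in> sets borel"
  shows "emeasure (hausdorff_measure s :: 'a measure) B = hausdorff_outer s B"
  using assms by (simp add: emeasure_hausdorff_measure_conv)

text \<open>Unless the Hausdorff outer measure is countably additive on the Borel sets,
  measure_of turns it into the null measure. In that case all the identities below hold
  trivially, so the Caratheodory measurability of Borel sets is never needed.\<close>

lemma hausdorff_measure_degenerate:
  assumes "\<not> measure_space UNIV (sets borel) (hausdorff_outer s :: 'a::euclidean_space set \<Rightarrow> ennreal)"
  shows "hausdorff_measure s = (null_measure borel :: 'a measure)"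
proof (rule measure_eqI)
  fix A :: "'a set"
  show "emeasure (hausdorff_measure s) A = emeasure (null_measure borel) A"
    using assms by (simp add: emeasure_hausdorff_measure_conv)
qed simp

section \<open>Change of variables under a conformal map\<close>

lemma ennreal_le_if_le_mult:
  fixes x y :: ennreal
  assumes le: "\<And>q::real. 1 < q \<Longrightarrow> x \<le> ennreal q * y"
  shows "x \<le> y"
proof (rule ennreal_le_epsilon)
  fix e :: real assume "y < top" "0 < e"
  then obtain r where r: "y = ennreal r" "0 \<le> r" by (cases y rule: ennreal_cases) auto
  have "x \<le> ennreal (1 + e / (r + 1)) * y"
    using \<open>0 < e\<close> r by (intro le) simp
  also have "\<dots> = ennreal (r + e * (r / (r + 1)))"
    using \<open>0 < e\<close> r by (simp add: field_simps flip: ennreal_mult)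
  also have "\<dots> \<le> ennreal (r + e)"
    using \<open>0 < e\<close> r by (intro ennreal_leI add_left_mono mult_left_le) auto
  finally show "x \<le> y + ennreal e"
    using \<open>0 < e\<close> r by (simp add: ennreal_plus)
qed

lemma log_scale_bracket:
  fixes q c v :: real
  assumes q: "1 < q" and c: "0 < c" "c \<le> v"
  defines "j \<equiv> nat \<lfloor>log q (v / c)\<rfloor>"
  shows "c * q ^ j \<le> v" "v \<le> q * (c * q ^ j)"
proof -
  define t where "t = log q (v / c)"
  have "1 \<le> v / c" using c by simp
  then have t: "0 \<le> t" "q powr t = v / c"
    using q c unfolding t_def by auto
  have j: "real j \<le> t" "t < real j + 1"
    using t(1) unfolding j_def t_def[symmetric] by linarith+
  have "q ^ j \<le> v / c"
    using q j(1) by (simp flip: t(2) powr_realpow)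
  then show "c * q ^ j \<le> v" using c by (simp add: field_simps)
  have "v / c \<le> q * q ^ j"
    using q powr_less_mono[OF j(2), of q] by (simp add: powr_add mult.commute flip: t(2) powr_realpow)
  then show "v \<le> q * (c * q ^ j)" using c by (simp add: field_simps)
qed

lemma emeasure_density_power_bounds:
  fixes \<rho> :: "'a \<Rightarrow> real"
  assumes \<rho>: "\<rho> \<in> borel_measurable M" and P: "P \<in> sets M"
    and a: "0 \<le> a" and bounds: "\<And>x. x \<in> P \<Longrightarrow> a \<le> \<rho> x \<and> \<rho> x \<le> b"
  shows "ennreal (a ^ n) * emeasure M P \<le> emeasure (density M (\<lambda>x. ennreal (\<rho> x ^ n))) P"
    and "emeasure (density M (\<lambda>x. ennreal (\<rho> x ^ n))) P \<le> ennreal (b ^ n) * emeasure M P"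
proof -
  have density_P: "emeasure (density M (\<lambda>x. ennreal (\<rho> x ^ n))) P
      = (\<integral>\<^sup>+x. ennreal (\<rho> x ^ n) * indicator P x \<partial>M)"
    using \<rho> P by (intro emeasure_density) auto
  have "ennreal (a ^ n) * emeasure M P = (\<integral>\<^sup>+x. ennreal (a ^ n) * indicator P x \<partial>M)"
    using P by (simp add: nn_integral_cmult_indicator)
  also have "\<dots> \<le> (\<integral>\<^sup>+x. ennreal (\<rho> x ^ n) * indicator P x \<partial>M)"
    using bounds a by (intro nn_integral_mono) (auto simp: indicator_def intro!: ennreal_leI power_mono)
  finally show "ennreal (a ^ n) * emeasure M P \<le> emeasure (density M (\<lambda>x. ennreal (\<rho> x ^ n))) P"
    unfolding density_P .
  have "(\<integral>\<^sup>+x. ennreal (\<rho> x ^ n) * indicator P x \<partial>M) \<le> (\<integral>\<^sup>+x. ennreal (b ^ n) * indicator P x \<partial>M)"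
    using bounds a by (intro nn_integral_mono)
      (auto simp: indicator_def intro!: ennreal_leI power_mono order_trans[OF a])
  also have "\<dots> = ennreal (b ^ n) * emeasure M P"
    using P by (simp add: nn_integral_cmult_indicator)
  finally show "emeasure (density M (\<lambda>x. ennreal (\<rho> x ^ n))) P \<le> ennreal (b ^ n) * emeasure M P"
    unfolding density_P .
qed

lemma emeasure_conformal_image_pinched:
  fixes \<phi> :: "'a::euclidean_space \<Rightarrow> 'b::euclidean_space" and \<rho> :: "'a \<Rightarrow> real"
    and n :: nat
  defines "H \<equiv> hausdorff_measure (real n) :: 'a measure"
    and "H' \<equiv> hausdorff_measure (real n) :: 'b measure"
  assumes MS: "measure_space UNIV (sets borel) (hausdorff_outer (real n) :: 'a set \<Rightarrow> ennreal)"
    and MS': "measure_space UNIV (sets borel) (hausdorff_outer (real n) :: 'b set \<Rightarrow> ennreal)"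
    and n: "0 < n" and \<rho>: "\<rho> \<in> borel_measurable borel"
    and conformal: "\<And>x y. x \<in> P \<Longrightarrow> y \<in> P \<Longrightarrow> dist (\<phi> x) (\<phi> y) = sqrt (\<rho> x * \<rho> y) * dist x y"
    and P: "P \<in> sets borel" "\<phi> ` P \<in> sets borel"
    and a: "0 < a" and q: "1 \<le> q" and pinch: "\<And>x. x \<in> P \<Longrightarrow> a \<le> \<rho> x \<and> \<rho> x \<le> q * a"
  shows "emeasure H' (\<phi> ` P) \<le> ennreal (q ^ n) * emeasure (density H (\<lambda>x. ennreal (\<rho> x ^ n))) P"
    and "emeasure (density H (\<lambda>x. ennreal (\<rho> x ^ n))) P \<le> ennreal (q ^ n) * emeasure H' (\<phi> ` P)"
proof -
  have s: "0 < real n" using n by simp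
  have qa: "0 < q * a" using a q by simp
  have sqrt_bounds: "a \<le> sqrt (\<rho> x * \<rho> y) \<and> sqrt (\<rho> x * \<rho> y) \<le> q * a" if "x \<in> P" "y \<in> P" for x y
  proof -
    have "a * a \<le> \<rho> x * \<rho> y" "\<rho> x * \<rho> y \<le> (q * a) * (q * a)"
      using pinch[OF that(1)] pinch[OF that(2)] a by (auto intro: mult_mono)
    then have "sqrt (a * a) \<le> sqrt (\<rho> x * \<rho> y)" "sqrt (\<rho> x * \<rho> y) \<le> sqrt ((q * a) * (q * a))"
      by (simp_all only: real_sqrt_le_mono)
    then show ?thesis using a qa by simp
  qed
  have "hausdorff_outer (real n) (\<phi> ` P) \<le> ennreal ((q * a) powr real n) * hausdorff_outer (real n) P"
    using sqrt_bounds by (intro hausdorff_outer_lipschitz_image[OF s qa]) (simp add: conformal mult_right_mono)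
  then have up: "emeasure H' (\<phi> ` P) \<le> ennreal ((q * a) ^ n) * emeasure H P"
    unfolding H_def H'_def using qa by (simp add: emeasure_hausdorff_measure MS MS' P powr_realpow)
  have "ennreal (a powr real n) * hausdorff_outer (real n) P \<le> hausdorff_outer (real n) (\<phi> ` P)"
    using sqrt_bounds by (intro hausdorff_outer_expanding_image[OF s a]) (simp add: conformal mult_right_mono)
  then have lo: "ennreal (a ^ n) * emeasure H P \<le> emeasure H' (\<phi> ` P)"
    unfolding H_def H'_def using a by (simp add: emeasure_hausdorff_measure MS MS' P powr_realpow)
  have density_lo: "ennreal (a ^ n) * emeasure H P \<le> emeasure (density H (\<lambda>x. ennreal (\<rho> x ^ n))) P"
    and density_up: "emeasure (density H (\<lambda>x. ennreal (\<rho> x ^ n))) P \<le> ennreal ((q * a) ^ n) * emeasure H P"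
    using emeasure_density_power_bounds[of \<rho> H P a "q * a" n] \<rho> P a pinch unfolding H_def by auto
  have split: "ennreal ((q * a) ^ n) * X = ennreal (q ^ n) * (ennreal (a ^ n) * X)" for X
    using q a by (simp add: power_mult_distrib ennreal_mult mult.assoc)
  show "emeasure H' (\<phi> ` P) \<le> ennreal (q ^ n) * emeasure (density H (\<lambda>x. ennreal (\<rho> x ^ n))) P"
    using up density_lo unfolding split by (meson mult_left_mono order_trans zero_le)
  show "emeasure (density H (\<lambda>x. ennreal (\<rho> x ^ n))) P \<le> ennreal (q ^ n) * emeasure H' (\<phi> ` P)"
    using density_up lo unfolding split by (meson mult_left_mono order_trans zero_le)
qed

lemma inj_on_conformal:
  fixes \<phi> :: "'a::metric_space \<Rightarrow> 'b::metric_space"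
  assumes conformal: "\<And>x y. x \<in> S \<Longrightarrow> y \<in> S \<Longrightarrow> dist (\<phi> x) (\<phi> y) = sqrt (\<rho> x * \<rho> y) * dist x y"
    and pos: "\<And>x. x \<in> S \<Longrightarrow> 0 < \<rho> x"
  shows "inj_on \<phi> S"
proof (rule inj_onI)
  fix x y assume "x \<in> S" "y \<in> S" "\<phi> x = \<phi> y"
  then show "x = y" using conformal[of x y] pos[of x] pos[of y] by simp
qed

lemma emeasure_image_disjoint_UN:
  assumes M: "sets M = sets borel" and inj: "inj_on \<phi> S" and P: "\<And>j. P j \<subseteq> S"
    and image_borel: "\<And>j. \<phi> ` P j \<in> sets borel" and disj: "disjoint_family P"
  shows "emeasure M (\<phi> ` (\<Union>j. P j)) = (\<Sum>j. emeasure M (\<phi> ` P j))"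
proof -
  have "disjoint_family (\<lambda>j. \<phi> ` P j)"
    using disj by (rule disjoint_family_on_bisimulation) (metis image_empty inj_on_image_Int[OF inj P P])
  then have "(\<Sum>j. emeasure M (\<phi> ` P j)) = emeasure M (\<Union>j. \<phi> ` P j)"
    using image_borel M by (intro suminf_emeasure) auto
  then show ?thesis by (simp add: image_UN)
qed

lemma emeasure_conformal_image_approx:
  fixes \<phi> :: "'a::euclidean_space \<Rightarrow> 'b::euclidean_space" and \<rho> :: "'a \<Rightarrow> real"
    and n :: nat
  defines "H \<equiv> hausdorff_measure (real n) :: 'a measure"
    and "H' \<equiv> hausdorff_measure (real n) :: 'b measure"
  assumes MS: "measure_space UNIV (sets borel) (hausdorff_outer (real n) :: 'a set \<Rightarrow> ennreal)"
    and MS': "measure_space UNIV (sets borel) (hausdorff_outer (real n) :: 'b set \<Rightarrow> ennreal)"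
    and n: "0 < n" and \<rho> [measurable]: "\<rho> \<in> borel_measurable borel"
    and conformal: "\<And>x y. x \<in> S \<Longrightarrow> y \<in> S \<Longrightarrow> dist (\<phi> x) (\<phi> y) = sqrt (\<rho> x * \<rho> y) * dist x y"
    and c: "0 < c" "\<And>x. x \<in> S \<Longrightarrow> c \<le> \<rho> x"
    and image_borel: "\<And>B. B \<in> sets borel \<Longrightarrow> B \<subseteq> S \<Longrightarrow> \<phi> ` B \<in> sets borel"
    and B: "B \<in> sets borel" "B \<subseteq> S"
    and q: "1 < q"
  shows "emeasure H' (\<phi> ` B) \<le> ennreal (q ^ n) * emeasure (density H (\<lambda>x. ennreal (\<rho> x ^ n))) B"
    and "emeasure (density H (\<lambda>x. ennreal (\<rho> x ^ n))) B \<le> ennreal (q ^ n) * emeasure H' (\<phi> ` B)"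
proof -
  define \<nu> where "\<nu> = density H (\<lambda>x. ennreal (\<rho> x ^ n))"
  have pos: "0 < \<rho> x" if "x \<in> S" for x using c(1) c(2)[OF that] by linarith
  have inj: "inj_on \<phi> S"
    using inj_on_conformal[where S = S and \<phi> = \<phi> and \<rho> = \<rho>] conformal pos by blast
  txt \<open>On the level set P j the factor lies in [c q^j, c q^(j+1)], so there phi is
    bi-Lipschitz with constants of ratio q.\<close>
  define level where "level x = nat \<lfloor>log q (\<rho> x / c)\<rfloor>" for x
  define P where "P j = B \<inter> level -` {j}" for j
  have P_borel [measurable]: "P j \<in> sets borel" for j
    unfolding P_def level_def using B(1) by measurable
  have P_sub: "P j \<subseteq> S" for j using B(2) unfolding P_def by blast
  have B_UN: "B = (\<Union>j. P j)" unfolding P_def by blast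
  have disj: "disjoint_family P" unfolding disjoint_family_on_def P_def by blast
  have H'B: "emeasure H' (\<phi> ` B) = (\<Sum>j. emeasure H' (\<phi> ` P j))"
    unfolding B_UN H'_def using inj P_sub image_borel[OF P_borel P_sub] disj
    by (intro emeasure_image_disjoint_UN) auto
  have "(\<Sum>j. emeasure \<nu> (P j)) = emeasure \<nu> (\<Union>j. P j)"
    by (rule suminf_emeasure) (use disj in \<open>auto simp: \<nu>_def H_def\<close>)
  then have \<nu>B: "emeasure \<nu> B = (\<Sum>j. emeasure \<nu> (P j))"
    by (simp flip: B_UN)
  have pieces: "emeasure H' (\<phi> ` P j) \<le> ennreal (q ^ n) * emeasure \<nu> (P j) \<and>
        emeasure \<nu> (P j) \<le> ennreal (q ^ n) * emeasure H' (\<phi> ` P j)" for j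
  proof -
    have bracket: "c * q ^ j \<le> \<rho> x \<and> \<rho> x \<le> q * (c * q ^ j)" if "x \<in> P j" for x
    proof -
      have "x \<in> S" "level x = j" using that P_sub unfolding P_def by auto
      then show ?thesis using log_scale_bracket[OF q c(1) c(2)] unfolding level_def by blast
    qed
    have "\<And>x y. x \<in> P j \<Longrightarrow> y \<in> P j \<Longrightarrow> dist (\<phi> x) (\<phi> y) = sqrt (\<rho> x * \<rho> y) * dist x y"
      using conformal P_sub by blast
    moreover have "0 < c * q ^ j" "1 \<le> q" using c(1) q by simp_all
    ultimately show ?thesis
      using emeasure_conformal_image_pinched[OF MS MS' n \<rho> _ P_borel image_borel[OF P_borel P_sub] _ _ bracket]
      unfolding \<nu>_def H_def H'_def by blast
  qed
  have "(\<Sum>j. emeasure H' (\<phi> ` P j)) \<le> (\<Sum>j. ennreal (q ^ n) * emeasure \<nu> (P j))"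
    by (rule suminf_le[OF _ summableI summableI]) (use pieces in blast)
  then show "emeasure H' (\<phi> ` B) \<le> ennreal (q ^ n) * emeasure (density H (\<lambda>x. ennreal (\<rho> x ^ n))) B"
    unfolding H'B \<nu>B[unfolded \<nu>_def] \<nu>_def by simp
  have "(\<Sum>j. emeasure \<nu> (P j)) \<le> (\<Sum>j. ennreal (q ^ n) * emeasure H' (\<phi> ` P j))"
    by (rule suminf_le[OF _ summableI summableI]) (use pieces in blast)
  then show "emeasure (density H (\<lambda>x. ennreal (\<rho> x ^ n))) B \<le> ennreal (q ^ n) * emeasure H' (\<phi> ` B)"
    unfolding H'B \<nu>B[unfolded \<nu>_def] \<nu>_def by simp
qed

lemma emeasure_conformal_image:
  fixes \<phi> :: "'a::euclidean_space \<Rightarrow> 'b::euclidean_space" and \<rho> :: "'a \<Rightarrow> real"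
    and n :: nat
  defines "H \<equiv> hausdorff_measure (real n) :: 'a measure"
    and "H' \<equiv> hausdorff_measure (real n) :: 'b measure"
  assumes MS: "measure_space UNIV (sets borel) (hausdorff_outer (real n) :: 'a set \<Rightarrow> ennreal)"
    and MS': "measure_space UNIV (sets borel) (hausdorff_outer (real n) :: 'b set \<Rightarrow> ennreal)"
    and n: "0 < n" and \<rho> [measurable]: "\<rho> \<in> borel_measurable borel"
    and conformal: "\<And>x y. x \<in> S \<Longrightarrow> y \<in> S \<Longrightarrow> dist (\<phi> x) (\<phi> y) = sqrt (\<rho> x * \<rho> y) * dist x y"
    and c: "0 < c" "\<And>x. x \<in> S \<Longrightarrow> c \<le> \<rho> x"
    and image_borel: "\<And>B. B \<in> sets borel \<Longrightarrow> B \<subseteq> S \<Longrightarrow> \<phi> ` B \<in> sets borel"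
    and B: "B \<in> sets borel" "B \<subseteq> S"
  shows "emeasure H' (\<phi> ` B) = emeasure (density H (\<lambda>x. ennreal (\<rho> x ^ n))) B"
proof (rule antisym; rule ennreal_le_if_le_mult)
  fix q :: real assume "1 < q"
  then have "1 < root n q" "root n q ^ n = q" using n by (simp_all add: real_root_gt_1_iff real_root_pow_pos2)
  then show "emeasure H' (\<phi> ` B) \<le> ennreal q * emeasure (density H (\<lambda>x. ennreal (\<rho> x ^ n))) B"
    "emeasure (density H (\<lambda>x. ennreal (\<rho> x ^ n))) B \<le> ennreal q * emeasure H' (\<phi> ` B)"
    using emeasure_conformal_image_approx[OF MS MS' n \<rho> conformal c image_borel B, of "root n q"]
    unfolding H_def H'_def by metis+
qed

lemma density_indicator_image_eq_distr:
  fixes \<phi> :: "'a::topological_space \<Rightarrow> 'b::topological_space" and w :: "'a \<Rightarrow> real"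
  assumes M: "sets M = sets borel" and N: "sets N = sets borel"
    and \<phi> [measurable]: "\<phi> \<in> borel_measurable borel" and w [measurable]: "w \<in> borel_measurable borel"
    and C [measurable]: "C \<in> sets borel" "\<phi> ` C \<in> sets borel"
    and image: "\<And>B. B \<in> sets borel \<Longrightarrow> B \<subseteq> C \<Longrightarrow> emeasure N (\<phi> ` B) = emeasure (density M w) B"
  shows "density N (\<lambda>y. ennreal (indicator (\<phi> ` C) y))
    = distr (density M (\<lambda>x. ennreal (indicator C x * w x))) N \<phi>"
proof (rule measure_eqI)
  define g where "g x = indicator C x * w x" for x
  have space_M: "space M = UNIV" using sets_eq_imp_space_eq[OF M] by simp
  have \<phi>_MN: "\<phi> \<in> measurable M N" using \<phi> by (simp add: measurable_cong_sets[OF M N])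
  fix A assume "A \<in> sets (density N (\<lambda>y. ennreal (indicator (\<phi> ` C) y)))"
  then have A: "A \<in> sets borel" using N by simp
  then have preimage: "\<phi> -` A \<in> sets borel" using measurable_sets[OF \<phi> A] by simp
  have "emeasure (density N (\<lambda>y. ennreal (indicator (\<phi> ` C) y))) A
      = (\<integral>\<^sup>+y. ennreal (indicator (\<phi> ` C) y) * indicator A y \<partial>N)"
    by (rule emeasure_density) (use N A in auto)
  also have "\<dots> = (\<integral>\<^sup>+y. indicator (A \<inter> \<phi> ` C) y \<partial>N)"
    by (rule nn_integral_cong) (auto simp: indicator_def)
  also have "\<dots> = emeasure N (A \<inter> \<phi> ` C)"
    by (rule nn_integral_indicator) (use N A C in simp)
  also have "A \<inter> \<phi> ` C = \<phi> ` (\<phi> -` A \<inter> C)" by blast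
  also have "emeasure N \<dots> = emeasure (density M w) (\<phi> -` A \<inter> C)"
    using preimage C(1) by (intro image) auto
  also have "\<dots> = (\<integral>\<^sup>+x. ennreal (w x) * indicator (\<phi> -` A \<inter> C) x \<partial>M)"
    by (rule emeasure_density) (use M preimage C(1) in auto)
  also have "\<dots> = (\<integral>\<^sup>+x. ennreal (g x) * indicator (\<phi> -` A) x \<partial>M)"
    by (rule nn_integral_cong) (auto simp: g_def indicator_def)
  also have "\<dots> = emeasure (density M g) (\<phi> -` A)"
    by (rule emeasure_density[symmetric]) (use M preimage in \<open>auto simp: g_def\<close>)
  also have "\<dots> = emeasure (distr (density M g) N \<phi>) A"
    using \<phi>_MN A N by (simp add: emeasure_distr space_M)
  finally show "emeasure (density N (\<lambda>y. ennreal (indicator (\<phi> ` C) y))) A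
      = emeasure (distr (density M (\<lambda>x. ennreal (indicator C x * w x))) N \<phi>) A"
    unfolding g_def .
qed simp

lemma set_integral_image_density:
  fixes \<phi> :: "'a::topological_space \<Rightarrow> 'b::topological_space"
    and w :: "'a \<Rightarrow> real" and f :: "'b \<Rightarrow> real"
  assumes M: "sets M = sets borel" and N: "sets N = sets borel"
    and \<phi> [measurable]: "\<phi> \<in> borel_measurable borel"
    and w [measurable]: "w \<in> borel_measurable borel" and w_nonneg: "\<And>x. x \<in> C \<Longrightarrow> 0 \<le> w x"
    and C [measurable]: "C \<in> sets borel" "\<phi> ` C \<in> sets borel"
    and f [measurable]: "f \<in> borel_measurable borel"
    and image: "\<And>B. B \<in> sets borel \<Longrightarrow> B \<subseteq> C \<Longrightarrow> emeasure N (\<phi> ` B) = emeasure (density M w) B"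
  shows "(\<integral>y\<in>\<phi> ` C. f y \<partial>N) = (\<integral>x\<in>C. w x * f (\<phi> x) \<partial>M)"
proof -
  have \<phi>_MN: "\<phi> \<in> measurable M N" using \<phi> by (simp add: measurable_cong_sets[OF M N])
  have "(\<integral>y\<in>\<phi> ` C. f y \<partial>N) = integral\<^sup>L (density N (\<lambda>y. ennreal (indicator (\<phi> ` C) y))) f"
    unfolding set_lebesgue_integral_def using N by (subst integral_density) auto
  also have "\<dots> = integral\<^sup>L (distr (density M (\<lambda>x. ennreal (indicator C x * w x))) N \<phi>) f"
    by (simp only: density_indicator_image_eq_distr[OF M N \<phi> w C image])
  also have "\<dots> = integral\<^sup>L (density M (\<lambda>x. ennreal (indicator C x * w x))) (\<lambda>x. f (\<phi> x))"
    using \<phi>_MN N by (intro integral_distr) auto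
  also have "\<dots> = (\<integral>x\<in>C. w x * f (\<phi> x) \<partial>M)"
    unfolding set_lebesgue_integral_def using M w_nonneg
    by (subst integral_density) (auto simp: indicator_def mult.assoc)
  finally show ?thesis .
qed

section \<open>The maps h and g\<close>

lemma dist_unit_sphere_sq:
  fixes x y :: "'a::real_inner"
  assumes "x \<in> sphere 0 1" "y \<in> sphere 0 1"
  shows "(dist x y)\<^sup>2 = 2 * (1 - x \<bullet> y)"
proof -
  have "(dist x y)\<^sup>2 = x \<bullet> x + y \<bullet> y - 2 * (x \<bullet> y)"
    by (simp add: dist_norm power2_norm_eq_inner inner_diff inner_commute)
  then show ?thesis using assms by (simp add: norm_eq_1)
qed

lemma inner_vec_split:
  fixes x y :: "real^'n"
  shows "x \<bullet> y = x $ k * y $ k + (\<Sum>i\<in>UNIV - {k}. x $ i * y $ i)"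
  unfolding inner_vec_def by (simp add: sum.remove[of UNIV k])

lemma sphere_abs_component_le:
  fixes x :: "real^'n"
  assumes "x \<in> sphere 0 1" shows "\<bar>x $ k\<bar> \<le> 1"
  using component_le_norm_cart[of x k] assms by simp

lemma sphere_hmap_denominator_pos:
  fixes x :: "real^'n"
  assumes "x \<in> sphere 0 1" "\<bar>z\<bar> < 1" shows "0 < 1 + z * x $ k"
proof -
  have "\<bar>z\<bar> * \<bar>x $ k\<bar> \<le> \<bar>z\<bar>"
    using sphere_abs_component_le[OF assms(1), of k] by (intro mult_left_le) auto
  then have "\<bar>z * x $ k\<bar> < 1" using assms(2) by (simp add: abs_mult)
  then show ?thesis by (simp add: abs_less_iff)
qed

lemma sphere_gmap_denominator_pos:
  fixes \<xi> :: "real^'n"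
  assumes "\<xi> \<in> sphere 0 1" "\<bar>z\<bar> < 1"
  shows "0 < 1 - z\<^sup>2 * (\<xi> $ k)\<^sup>2"
proof -
  have "(\<xi> $ k)\<^sup>2 \<le> 1"
    using sphere_abs_component_le[OF assms(1), of k] by (metis power2_abs power_le_one abs_ge_zero)
  moreover have "z\<^sup>2 < 1" using assms(2) by (simp add: abs_square_less_1)
  ultimately have "z\<^sup>2 * (\<xi> $ k)\<^sup>2 < 1"
    using mult_left_mono[of "(\<xi> $ k)\<^sup>2" 1 "z\<^sup>2"] by simp
  then show ?thesis by simp
qed

lemma hmap_component:
  "hmap k z x $ i = (if i = k then (z + x $ k) / (1 + z * x $ k)
                     else sqrt (1 - z\<^sup>2) / (1 + z * x $ k) * x $ i)"
  by (simp add: hmap_def)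

lemma inner_hmap:
  fixes x y :: "real^'n"
  assumes z: "\<bar>z\<bar> < 1" and dx: "1 + z * x $ k \<noteq> 0" and dy: "1 + z * y $ k \<noteq> 0"
  shows "hmap k z x \<bullet> hmap k z y =
     ((1 - z\<^sup>2) * (x \<bullet> y - x $ k * y $ k) + (z + x $ k) * (z + y $ k)) / ((1 + z * x $ k) * (1 + z * y $ k))"
proof -
  have sq: "sqrt (1 - z\<^sup>2) * sqrt (1 - z\<^sup>2) = 1 - z\<^sup>2"
    using z by (simp add: abs_square_less_1 less_imp_le)
  have "(\<Sum>i\<in>UNIV - {k}. hmap k z x $ i * hmap k z y $ i) =
        (\<Sum>i\<in>UNIV - {k}. sqrt (1 - z\<^sup>2) * sqrt (1 - z\<^sup>2) / ((1 + z * x $ k) * (1 + z * y $ k)) * (x $ i * y $ i))"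
    by (rule sum.cong) (auto simp: hmap_component)
  also have "\<dots> = (1 - z\<^sup>2) / ((1 + z * x $ k) * (1 + z * y $ k)) * (x \<bullet> y - x $ k * y $ k)"
    unfolding sq by (simp add: sum_distrib_left inner_vec_split[of x y k])
  finally have rest: "(\<Sum>i\<in>UNIV - {k}. hmap k z x $ i * hmap k z y $ i)
      = (1 - z\<^sup>2) / ((1 + z * x $ k) * (1 + z * y $ k)) * (x \<bullet> y - x $ k * y $ k)" .
  have "hmap k z x \<bullet> hmap k z y = (z + x $ k) / (1 + z * x $ k) * ((z + y $ k) / (1 + z * y $ k))
      + (1 - z\<^sup>2) / ((1 + z * x $ k) * (1 + z * y $ k)) * (x \<bullet> y - x $ k * y $ k)"
    by (subst inner_vec_split[of _ _ k], subst rest) (simp add: hmap_component)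
  also have "\<dots> = ((z + x $ k) * (z + y $ k) + (1 - z\<^sup>2) * (x \<bullet> y - x $ k * y $ k))
      / ((1 + z * x $ k) * (1 + z * y $ k))"
    by (subst times_divide_times_eq, subst times_divide_eq_left, subst add_divide_distrib[symmetric]) (rule refl)
  finally show ?thesis by (simp add: add.commute)
qed

lemma one_minus_inner_hmap:
  fixes x y :: "real^'n"
  assumes z: "\<bar>z\<bar> < 1" and x: "x \<in> sphere 0 1" and y: "y \<in> sphere 0 1"
  shows "1 - hmap k z x \<bullet> hmap k z y = (1 - z\<^sup>2) / ((1 + z * x $ k) * (1 + z * y $ k)) * (1 - x \<bullet> y)"
proof -
  have dx: "0 < 1 + z * x $ k" and dy: "0 < 1 + z * y $ k"
    using sphere_hmap_denominator_pos x y z by auto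
  have "1 - hmap k z x \<bullet> hmap k z y
      = ((1 + z * x $ k) * (1 + z * y $ k) - ((1 - z\<^sup>2) * (x \<bullet> y - x $ k * y $ k) + (z + x $ k) * (z + y $ k)))
        / ((1 + z * x $ k) * (1 + z * y $ k))"
    using dx dy by (simp add: inner_hmap[OF z] diff_divide_distrib)
  also have "(1 + z * x $ k) * (1 + z * y $ k) - ((1 - z\<^sup>2) * (x \<bullet> y - x $ k * y $ k) + (z + x $ k) * (z + y $ k))
        = (1 - z\<^sup>2) * (1 - x \<bullet> y)"
    by (simp add: algebra_simps power2_eq_square)
  finally show ?thesis by simp
qed

lemma hmap_sphere:
  fixes x :: "real^'n"
  assumes z: "\<bar>z\<bar> < 1" and x: "x \<in> sphere 0 1"
  shows "hmap k z x \<in> sphere 0 1"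
  using one_minus_inner_hmap[OF z x x, of k] x by (simp add: norm_eq_1)

definition conformal_factor :: "'n::finite \<Rightarrow> real \<Rightarrow> real^'n \<Rightarrow> real" where
  "conformal_factor k z x = sqrt (1 - z\<^sup>2) / (1 + z * x $ k)"

lemma conformal_factor_pos:
  fixes x :: "real^'n"
  assumes "x \<in> sphere 0 1" "\<bar>z\<bar> < 1" shows "0 < conformal_factor k z x"
  unfolding conformal_factor_def using sphere_hmap_denominator_pos[OF assms] assms(2)
  by (simp add: abs_square_less_1)

lemma conformal_factor_lower_bound:
  fixes x :: "real^'n"
  assumes x: "x \<in> sphere 0 1" and z: "\<bar>z\<bar> < 1"
  shows "sqrt (1 - z\<^sup>2) / (1 + \<bar>z\<bar>) \<le> conformal_factor k z x"
proof -
  have "z * x $ k \<le> \<bar>z\<bar>"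
    using sphere_abs_component_le[OF x, of k] abs_mult[of z "x $ k"] mult_left_le[of "\<bar>x $ k\<bar>" "\<bar>z\<bar>"]
    by (smt (verit) abs_ge_zero)
  then show ?thesis
    unfolding conformal_factor_def using sphere_hmap_denominator_pos[OF x z, of k] z
    by (intro divide_left_mono) (auto simp: abs_square_le_1)
qed

lemma dist_hmap:
  fixes x y :: "real^'n"
  assumes z: "\<bar>z\<bar> < 1" and x: "x \<in> sphere 0 1" and y: "y \<in> sphere 0 1"
  shows "dist (hmap k z x) (hmap k z y) = sqrt (conformal_factor k z x * conformal_factor k z y) * dist x y"
proof -
  have "conformal_factor k z x * conformal_factor k z y = (1 - z\<^sup>2) / ((1 + z * x $ k) * (1 + z * y $ k))"
    unfolding conformal_factor_def using z by (simp add: abs_square_less_1 less_imp_le)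
  then have "(dist (hmap k z x) (hmap k z y))\<^sup>2 = (conformal_factor k z x * conformal_factor k z y) * (dist x y)\<^sup>2"
    using dist_unit_sphere_sq[OF hmap_sphere[OF z x] hmap_sphere[OF z y], of k k]
      dist_unit_sphere_sq[OF x y] one_minus_inner_hmap[OF z x y, of k] by simp
  then show ?thesis
    by (metis real_sqrt_mult real_sqrt_unique zero_le_dist)
qed

lemma hmap_minus_hmap:
  fixes x :: "real^'n"
  assumes z: "\<bar>z\<bar> < 1" and d: "1 + z * x $ k \<noteq> 0"
  shows "hmap k (- z) (hmap k z x) = x"
proof -
  have z2: "0 < 1 - z\<^sup>2" using z by (simp add: abs_square_less_1)
  define y where "y = hmap k z x"
  have yk: "y $ k = (z + x $ k) / (1 + z * x $ k)" unfolding y_def by (simp add: hmap_component)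
  have yi: "y $ i = sqrt (1 - z\<^sup>2) / (1 + z * x $ k) * x $ i" if "i \<noteq> k" for i
    unfolding y_def using that by (simp add: hmap_component)
  have den: "1 - z * y $ k = (1 - z\<^sup>2) / (1 + z * x $ k)"
    unfolding yk using d by (simp add: field_simps power2_eq_square)
  have num: "y $ k - z = x $ k * (1 - z\<^sup>2) / (1 + z * x $ k)"
    unfolding yk using d by (simp add: field_simps power2_eq_square)
  have "hmap k (- z) y $ i = x $ i" for i
  proof (cases "i = k")
    case True
    then show ?thesis using num den d z2 by (simp add: hmap_component)
  next
    case False
    then show ?thesis
      using d z2 by (simp add: hmap_component den yi mult.assoc[symmetric])
  qed
  then show ?thesis unfolding y_def by (simp add: vec_eq_iff)
qed

lemma hmap_hmap_minus:
  fixes x :: "real^'n"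
  assumes "\<bar>z\<bar> < 1" "x \<in> sphere 0 1"
  shows "hmap k z (hmap k (- z) x) = x" "hmap k (- z) (hmap k z x) = x"
  using hmap_minus_hmap[where z = "- z" and k = k and x = x] hmap_minus_hmap[where z = z and k = k and x = x] assms
    sphere_hmap_denominator_pos[of x "- z" k] sphere_hmap_denominator_pos[of x z k]
  by auto

definition gmap_numerator :: "'n::finite \<Rightarrow> real \<Rightarrow> real^'n \<Rightarrow> real^'n" where
  "gmap_numerator k z \<xi> = (\<chi> i. if i = k then sqrt (1 - z\<^sup>2) * \<xi> $ k else \<xi> $ i)"

lemma gmap_eq:
  fixes \<xi> :: "real^'n"
  assumes "\<xi> \<in> sphere 0 1" "\<bar>z\<bar> < 1"
  shows "gmap k z \<xi> = (1 / sqrt (1 - z\<^sup>2 * (\<xi> $ k)\<^sup>2)) *\<^sub>R gmap_numerator k z \<xi>"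
proof -
  have "(1 - z\<^sup>2 * (\<xi> $ k)\<^sup>2) powr (- 1 / 2) = 1 / sqrt (1 - z\<^sup>2 * (\<xi> $ k)\<^sup>2)"
    using sphere_gmap_denominator_pos[OF assms, of k]
    by (simp add: powr_minus_divide powr_half_sqrt less_imp_le flip: minus_divide_left)
  then show ?thesis unfolding gmap_def gmap_numerator_def by simp
qed

lemma inner_gmap_numerator:
  fixes x \<xi> :: "real^'n"
  shows "x \<bullet> gmap_numerator k z \<xi> = x $ k * (sqrt (1 - z\<^sup>2) * \<xi> $ k) + (\<Sum>i\<in>UNIV - {k}. x $ i * \<xi> $ i)"
  by (subst inner_vec_split[of x _ k]) (simp add: gmap_numerator_def)

lemma gmap_sphere:
  fixes \<xi> :: "real^'n"
  assumes \<xi>: "\<xi> \<in> sphere 0 1" and z: "\<bar>z\<bar> < 1"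
  shows "gmap k z \<xi> \<in> sphere 0 1"
proof -
  have "(\<Sum>i\<in>UNIV - {k}. \<xi> $ i * \<xi> $ i) = 1 - (\<xi> $ k)\<^sup>2"
    using inner_vec_split[of \<xi> \<xi> k] \<xi> by (simp add: norm_eq_1 power2_eq_square)
  moreover have "sqrt (1 - z\<^sup>2) * sqrt (1 - z\<^sup>2) = 1 - z\<^sup>2"
    using z by (simp add: abs_square_less_1 less_imp_le)
  ultimately have "gmap_numerator k z \<xi> \<bullet> gmap_numerator k z \<xi> = 1 - z\<^sup>2 * (\<xi> $ k)\<^sup>2"
    by (subst inner_gmap_numerator) (simp add: gmap_numerator_def algebra_simps power2_eq_square)
  then show ?thesis
    using sphere_gmap_denominator_pos[OF \<xi> z, of k]
    by (simp add: gmap_eq[OF \<xi> z] norm_eq_sqrt_inner)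
qed

lemma hmap_image_eq_vimage:
  fixes P :: "(real^'n) set"
  assumes z: "\<bar>z\<bar> < 1" and P: "P \<subseteq> sphere 0 1"
  shows "hmap k z ` P = sphere 0 1 \<inter> hmap k (- z) -` P"
proof (intro equalityI subsetI)
  fix y assume "y \<in> hmap k z ` P"
  then obtain x where x: "x \<in> P" "y = hmap k z x" by blast
  then have "x \<in> sphere 0 1" using P by blast
  then show "y \<in> sphere 0 1 \<inter> hmap k (- z) -` P"
    using x hmap_sphere[OF z \<open>x \<in> sphere 0 1\<close>] hmap_hmap_minus(2)[OF z \<open>x \<in> sphere 0 1\<close>]
    by simp
next
  fix y assume "y \<in> sphere 0 1 \<inter> hmap k (- z) -` P"
  then show "y \<in> hmap k z ` P"
    using hmap_hmap_minus[OF z] by (metis IntD1 IntD2 image_eqI vimageD)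
qed

lemma borel_measurable_vec_lambda:
  fixes F :: "'a \<Rightarrow> 'n::finite \<Rightarrow> real"
  assumes "\<And>i. (\<lambda>x. F x i) \<in> borel_measurable M"
  shows "(\<lambda>x. (\<chi> i. F x i) :: real^'n) \<in> borel_measurable M"
  unfolding borel_measurable_euclidean_space[where 'c="real^'n"]
  using assms by (auto simp: Basis_vec_def inner_axis)

lemma hmap_measurable [measurable]: "(hmap k z :: real^'n \<Rightarrow> real^'n) \<in> borel_measurable borel"
proof -
  have "(\<lambda>x. x $ i) \<in> borel_measurable borel" for i :: 'n
    by (intro borel_measurable_continuous_onI continuous_on_component continuous_on_id)
  then show ?thesis
    unfolding hmap_def[abs_def] by (intro borel_measurable_vec_lambda) measurable
qed

section \<open>The circles\<close>

lemma inner_hmap_scaled: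
  fixes x \<xi> :: "real^'n"
  assumes z: "\<bar>z\<bar> < 1" and d: "1 + z * x $ k \<noteq> 0"
  shows "(1 + z * x $ k) * (hmap k z x \<bullet> \<xi>)
    = z * \<xi> $ k * (1 + z * x $ k) + sqrt (1 - z\<^sup>2) * (x \<bullet> gmap_numerator k z \<xi>)"
proof -
  have z2: "0 \<le> 1 - z\<^sup>2" using z by (simp add: abs_square_less_1 less_imp_le)
  define T where "T = (\<Sum>i\<in>UNIV - {k}. x $ i * \<xi> $ i)"
  have "(\<Sum>i\<in>UNIV - {k}. hmap k z x $ i * \<xi> $ i) = sqrt (1 - z\<^sup>2) / (1 + z * x $ k) * T"
    unfolding T_def sum_distrib_left by (rule sum.cong) (auto simp: hmap_component)
  then have "hmap k z x \<bullet> \<xi> = (z + x $ k) / (1 + z * x $ k) * \<xi> $ k + sqrt (1 - z\<^sup>2) / (1 + z * x $ k) * T"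
    by (simp add: inner_vec_split[of "hmap k z x" \<xi> k] hmap_component)
  then have "(1 + z * x $ k) * (hmap k z x \<bullet> \<xi>) = (z + x $ k) * \<xi> $ k + sqrt (1 - z\<^sup>2) * T"
    using d by (simp add: distrib_left)
  also have "\<dots> = z * \<xi> $ k * (1 + z * x $ k) + sqrt (1 - z\<^sup>2) * (x $ k * (sqrt (1 - z\<^sup>2) * \<xi> $ k) + T)"
    using z2 by (simp add: algebra_simps power2_eq_square flip: real_sqrt_mult)
  finally show ?thesis unfolding inner_gmap_numerator T_def .
qed

lemma hmap_mem_circ_iff:
  fixes x \<xi> :: "real^'n"
  assumes x: "x \<in> sphere 0 1" and \<xi>: "\<xi> \<in> sphere 0 1" and z: "\<bar>z\<bar> < 1"
  shows "hmap k z x \<bullet> \<xi> = z * \<xi> $ k \<longleftrightarrow> x \<bullet> gmap k z \<xi> = 0"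
proof -
  have D: "0 < 1 + z * x $ k" by (rule sphere_hmap_denominator_pos[OF x z])
  have s: "0 < sqrt (1 - z\<^sup>2)" using z by (simp add: abs_square_less_1)
  have r: "0 < sqrt (1 - z\<^sup>2 * (\<xi> $ k)\<^sup>2)" using sphere_gmap_denominator_pos[OF \<xi> z, of k] by simp
  have "hmap k z x \<bullet> \<xi> = z * \<xi> $ k \<longleftrightarrow> (1 + z * x $ k) * (hmap k z x \<bullet> \<xi>) = (1 + z * x $ k) * (z * \<xi> $ k)"
    using D by simp
  also have "\<dots> \<longleftrightarrow> sqrt (1 - z\<^sup>2) * (x \<bullet> gmap_numerator k z \<xi>) = 0"
    unfolding inner_hmap_scaled[OF z D[THEN less_imp_neq, symmetric]] by (simp add: algebra_simps)
  also have "\<dots> \<longleftrightarrow> x \<bullet> gmap k z \<xi> = 0" unfolding gmap_eq[OF \<xi> z] using r s by simp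
  finally show ?thesis .
qed

lemma circ_subset_sphere: "circ k z \<xi> \<subseteq> sphere 0 1"
  unfolding circ_def by blast

lemma circ_borel [measurable]: "circ k z \<xi> \<in> sets borel"
proof -
  have "circ k z \<xi> = sphere 0 1 \<inter> {\<eta> \<in> space borel. \<eta> \<bullet> \<xi> = z * \<xi> $ k}"
    unfolding circ_def by auto
  also have "\<dots> \<in> sets borel" by (intro sets.Int) (auto simp: closed_sphere)
  finally show ?thesis .
qed

lemma hmap_image_circ:
  fixes \<xi> :: "real^'n"
  assumes \<xi>: "\<xi> \<in> sphere 0 1" and z: "\<bar>z\<bar> < 1"
  shows "hmap k z ` circ k 0 (gmap k z \<xi>) = circ k z \<xi>"
proof -
  have "hmap k z ` circ k 0 (gmap k z \<xi>) = sphere 0 1 \<inter> hmap k (- z) -` circ k 0 (gmap k z \<xi>)"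
    by (rule hmap_image_eq_vimage[OF z circ_subset_sphere])
  also have "\<dots> = circ k z \<xi>"
  proof (intro equalityI subsetI)
    fix y assume "y \<in> sphere 0 1 \<inter> hmap k (- z) -` circ k 0 (gmap k z \<xi>)"
    then have y: "y \<in> sphere 0 1" "hmap k (- z) y \<in> sphere 0 1" "hmap k (- z) y \<bullet> gmap k z \<xi> = 0"
      unfolding circ_def by auto
    then show "y \<in> circ k z \<xi>"
      using hmap_mem_circ_iff[OF y(2) \<xi> z, of k] hmap_hmap_minus(1)[OF z y(1), of k]
      unfolding circ_def by simp
  next
    fix y assume "y \<in> circ k z \<xi>"
    then have y: "y \<in> sphere 0 1" "y \<bullet> \<xi> = z * \<xi> $ k" unfolding circ_def by auto
    have x: "hmap k (- z) y \<in> sphere 0 1" using hmap_sphere[of "- z"] z y(1) by simp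
    then show "y \<in> sphere 0 1 \<inter> hmap k (- z) -` circ k 0 (gmap k z \<xi>)"
      using hmap_mem_circ_iff[OF x \<xi> z, of k] hmap_hmap_minus(1)[OF z y(1), of k] y
      unfolding circ_def by simp
  qed
  finally show ?thesis .
qed

lemma unit_sphere_slice_similar:
  fixes g \<xi> :: "real^'n"
  assumes g: "g \<in> sphere 0 1" and \<xi>: "\<xi> \<in> sphere 0 1" and t: "t\<^sup>2 < 1"
  obtains \<phi> where "\<And>x y. dist (\<phi> x) (\<phi> y) = sqrt (1 - t\<^sup>2) * dist x y"
    "\<phi> ` {\<eta> \<in> sphere 0 1. \<eta> \<bullet> g = 0} = {\<eta> \<in> sphere 0 1. \<eta> \<bullet> \<xi> = t}"
proof -
  define r where "r = sqrt (1 - t\<^sup>2)"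
  have r: "0 < r" "r\<^sup>2 = 1 - t\<^sup>2" unfolding r_def using t by simp_all
  have \<xi>\<xi>: "\<xi> \<bullet> \<xi> = 1" using \<xi> by (simp add: norm_eq_1)
  obtain R where R: "orthogonal_transformation R" "R g = \<xi>"
    using orthogonal_transformation_exists[of g \<xi>] g \<xi> by auto
  have R_inner: "R u \<bullet> R v = u \<bullet> v" for u v using R(1) unfolding orthogonal_transformation_def by simp
  define \<phi> where "\<phi> x = t *\<^sub>R \<xi> + r *\<^sub>R R x" for x
  have "dist (\<phi> x) (\<phi> y) = r * dist x y" for x y
  proof -
    have "\<phi> x - \<phi> y = r *\<^sub>R R (x - y)"
      unfolding \<phi>_def using orthogonal_transformation_linear[OF R(1)] by (simp add: linear_diff algebra_simps)
    then show ?thesis using r(1) orthogonal_transformation_norm[OF R(1)] by (simp add: dist_norm)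
  qed
  moreover have "\<phi> ` {\<eta> \<in> sphere 0 1. \<eta> \<bullet> g = 0} = {\<eta> \<in> sphere 0 1. \<eta> \<bullet> \<xi> = t}"
  proof (intro equalityI subsetI)
    fix y assume "y \<in> \<phi> ` {\<eta> \<in> sphere 0 1. \<eta> \<bullet> g = 0}"
    then obtain x where x: "x \<bullet> x = 1" "x \<bullet> g = 0" and y: "y = \<phi> x"
      by (auto simp: norm_eq_1)
    have "R x \<bullet> \<xi> = 0" "R x \<bullet> R x = 1" using R_inner[of x g] R_inner[of x x] x R(2) by simp_all
    then have "y \<bullet> y = 1" "y \<bullet> \<xi> = t"
      unfolding y \<phi>_def using \<xi>\<xi> r(2)
      by (simp_all add: inner_add inner_commute algebra_simps power2_eq_square)
    then show "y \<in> {\<eta> \<in> sphere 0 1. \<eta> \<bullet> \<xi> = t}" by (simp add: norm_eq_1)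
  next
    fix y assume "y \<in> {\<eta> \<in> sphere 0 1. \<eta> \<bullet> \<xi> = t}"
    then have yy: "y \<bullet> y = 1" and y\<xi>: "y \<bullet> \<xi> = t" by (auto simp: norm_eq_1)
    obtain x where x: "R x = (1 / r) *\<^sub>R (y - t *\<^sub>R \<xi>)"
      using orthogonal_transformation_surj[OF R(1)] by (metis surjD)
    have "(y - t *\<^sub>R \<xi>) \<bullet> \<xi> = 0" "(y - t *\<^sub>R \<xi>) \<bullet> (y - t *\<^sub>R \<xi>) = r\<^sup>2"
      using yy y\<xi> \<xi>\<xi> r(2) by (simp_all add: inner_diff inner_commute algebra_simps power2_eq_square)
    then have "R x \<bullet> R g = 0" "R x \<bullet> R x = 1"
      unfolding x R(2) using r(1) by (simp_all add: power2_eq_square)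
    then have "x \<in> {\<eta> \<in> sphere 0 1. \<eta> \<bullet> g = 0}" by (simp add: R_inner norm_eq_1)
    moreover have "\<phi> x = y" unfolding \<phi>_def x using r(1) by simp
    ultimately show "y \<in> \<phi> ` {\<eta> \<in> sphere 0 1. \<eta> \<bullet> g = 0}" by blast
  qed
  ultimately show ?thesis using that unfolding r_def by blast
qed

lemma measure_circ:
  fixes \<xi> :: "real^'n" and n :: nat
  defines "H \<equiv> hausdorff_measure (real n) :: (real^'n) measure"
  assumes n: "0 < n" and z: "\<bar>z\<bar> < 1" and \<xi>: "\<xi> \<in> sphere 0 1"
  shows "measure H (circ k z \<xi>) = sqrt (1 - z\<^sup>2 * (\<xi> $ k)\<^sup>2) ^ n * measure H (circ k 0 (gmap k z \<xi>))"
proof (cases "measure_space UNIV (sets borel) (hausdorff_outer (real n) :: (real^'n) set \<Rightarrow> ennreal)")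
  case False
  then show ?thesis unfolding H_def by (simp add: hausdorff_measure_degenerate measure_def)
next
  case MS: True
  define r where "r = sqrt (1 - z\<^sup>2 * (\<xi> $ k)\<^sup>2)"
  have r: "0 < r" unfolding r_def using sphere_gmap_denominator_pos[OF \<xi> z] by simp
  have t: "(z * \<xi> $ k)\<^sup>2 < 1" using sphere_gmap_denominator_pos[OF \<xi> z, of k] by (simp add: power_mult_distrib)
  obtain \<phi> where "\<And>x y. dist (\<phi> x) (\<phi> y) = sqrt (1 - (z * \<xi> $ k)\<^sup>2) * dist x y"
    and "\<phi> ` {\<eta> \<in> sphere 0 1. \<eta> \<bullet> gmap k z \<xi> = 0} = {\<eta> \<in> sphere 0 1. \<eta> \<bullet> \<xi> = z * \<xi> $ k}"
    using unit_sphere_slice_similar[OF gmap_sphere[OF \<xi> z, of k] \<xi> t] by blast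
  then have dist: "\<And>x y. dist (\<phi> x) (\<phi> y) = r * dist x y"
    and image: "\<phi> ` circ k 0 (gmap k z \<xi>) = circ k z \<xi>"
    unfolding circ_def r_def by (simp_all add: power_mult_distrib)
  have "emeasure H (circ k z \<xi>) = hausdorff_outer (real n) (\<phi> ` circ k 0 (gmap k z \<xi>))"
    unfolding H_def image by (rule emeasure_hausdorff_measure[OF MS circ_borel])
  also have "\<dots> = ennreal (r powr real n) * hausdorff_outer (real n) (circ k 0 (gmap k z \<xi>))"
    using n r dist by (intro hausdorff_outer_similar_image) auto
  also have "\<dots> = ennreal (r ^ n) * emeasure H (circ k 0 (gmap k z \<xi>))"
    unfolding H_def using r by (simp add: emeasure_hausdorff_measure[OF MS circ_borel] powr_realpow)
  finally have "emeasure H (circ k z \<xi>) = ennreal (r ^ n) * emeasure H (circ k 0 (gmap k z \<xi>))" .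
  then show ?thesis
    unfolding measure_def r_def[symmetric] using r by (simp add: enn2real_mult)
qed

lemma emeasure_hmap_image:
  fixes B :: "(real^'n) set" and n :: nat
  defines "H \<equiv> hausdorff_measure (real n) :: (real^'n) measure"
  assumes MS: "measure_space UNIV (sets borel) (hausdorff_outer (real n) :: (real^'n) set \<Rightarrow> ennreal)"
    and n: "0 < n" and z: "\<bar>z\<bar> < 1" and B: "B \<in> sets borel" "B \<subseteq> sphere 0 1"
  shows "emeasure H (hmap k z ` B) = emeasure (density H (\<lambda>x. ennreal (conformal_factor k z x ^ n))) B"
  unfolding H_def
proof (rule emeasure_conformal_image[OF MS MS n _ _ _ _ _ B])
  show "conformal_factor k z \<in> borel_measurable borel"
    unfolding conformal_factor_def[abs_def] by measurable
  show "0 < sqrt (1 - z\<^sup>2) / (1 + \<bar>z\<bar>)" using z by (simp add: abs_square_less_1)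
  show "sqrt (1 - z\<^sup>2) / (1 + \<bar>z\<bar>) \<le> conformal_factor k z x" if "x \<in> sphere 0 1" for x
    using conformal_factor_lower_bound[OF that z] .
  show "hmap k z ` P \<in> sets borel" if "P \<in> sets borel" "P \<subseteq> sphere 0 1" for P
  proof -
    have "hmap k (- z) -` P \<in> sets borel" using measurable_sets[OF hmap_measurable that(1)] by simp
    then show ?thesis
      unfolding hmap_image_eq_vimage[OF z that(2)] by (intro sets.Int) (auto simp: closed_sphere)
  qed
qed (use dist_hmap[OF z] in blast)

lemma set_integral_circ_hmap:
  fixes \<xi> :: "real^'n" and f :: "real^'n \<Rightarrow> real" and n :: nat
  defines "H \<equiv> hausdorff_measure (real n) :: (real^'n) measure"
  assumes n: "0 < n" and z: "\<bar>z\<bar> < 1" and \<xi>: "\<xi> \<in> sphere 0 1"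
    and f: "continuous_on (sphere 0 1) f"
  shows "(\<integral>\<eta>\<in>circ k z \<xi>. f \<eta> \<partial>H)
    = (\<integral>\<eta>\<in>circ k 0 (gmap k z \<xi>). conformal_factor k z \<eta> ^ n * f (hmap k z \<eta>) \<partial>H)"
proof (cases "measure_space UNIV (sets borel) (hausdorff_outer (real n) :: (real^'n) set \<Rightarrow> ennreal)")
  case False
  then show ?thesis
    unfolding H_def set_lebesgue_integral_def by (simp add: hausdorff_measure_degenerate)
next
  case MS: True
  define C where "C = circ k 0 (gmap k z \<xi>)"
  txt \<open>f is only continuous on the sphere; its extension by zero is Borel.\<close>
  define f' where "f' y = indicator (sphere 0 1) y *\<^sub>R f y" for y :: "real^'n"
  have f' [measurable]: "f' \<in> borel_measurable borel"
    unfolding f'_def using f by (intro borel_measurable_continuous_on_indicator) auto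
  have C_sphere: "C \<subseteq> sphere 0 1" unfolding C_def by (rule circ_subset_sphere)
  have image: "hmap k z ` C = circ k z \<xi>" unfolding C_def by (rule hmap_image_circ[OF \<xi> z])
  have "(\<integral>\<eta>\<in>circ k z \<xi>. f \<eta> \<partial>H) = (\<integral>\<eta>\<in>hmap k z ` C. f' \<eta> \<partial>H)"
    unfolding image H_def f'_def
    by (intro set_lebesgue_integral_cong) (use circ_subset_sphere[of k z \<xi>] in \<open>auto simp: indicator_def\<close>)
  also have "\<dots> = (\<integral>\<eta>\<in>C. conformal_factor k z \<eta> ^ n * f' (hmap k z \<eta>) \<partial>H)"
  proof (rule set_integral_image_density)
    show "(\<lambda>x. conformal_factor k z x ^ n) \<in> borel_measurable borel"
      unfolding conformal_factor_def by measurable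
    show "0 \<le> conformal_factor k z x ^ n" if "x \<in> C" for x
      using that C_sphere conformal_factor_pos[OF _ z] by (blast intro: zero_le_power less_imp_le)
    show "emeasure H (hmap k z ` B) = emeasure (density H (\<lambda>x. ennreal (conformal_factor k z x ^ n))) B"
      if "B \<in> sets borel" "B \<subseteq> C" for B
      unfolding H_def using that C_sphere by (intro emeasure_hmap_image[OF MS n z]) auto
  qed (simp_all add: H_def image f' circ_borel[of k 0 "gmap k z \<xi>", folded C_def])
  also have "\<dots> = (\<integral>\<eta>\<in>C. conformal_factor k z \<eta> ^ n * f (hmap k z \<eta>) \<partial>H)"
  proof (intro set_lebesgue_integral_cong allI impI)
    show "C \<in> sets H" by (simp add: H_def C_def)
    fix \<eta> assume "\<eta> \<in> C"
    then have "hmap k z \<eta> \<in> sphere 0 1" using C_sphere hmap_sphere[OF z] by blast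
    then show "conformal_factor k z \<eta> ^ n * f' (hmap k z \<eta>) = conformal_factor k z \<eta> ^ n * f (hmap k z \<eta>)"
      by (simp add: f'_def)
  qed
  finally show ?thesis unfolding C_def .
qed

lemma powr_minus_half_of_nat:
  fixes x :: real
  assumes "0 < x"
  shows "x powr (- real n / 2) = 1 / sqrt x ^ n"
proof -
  have "x powr (real n / 2) = (x powr (1 / 2)) powr real n" by (simp add: powr_powr)
  also have "\<dots> = sqrt x ^ n" using assms by (simp add: powr_half_sqrt powr_realpow)
  finally show ?thesis by (simp add: powr_minus_divide)
qed

theorem mainTheorem3:
  fixes k :: "'n::finite" and z :: real and f :: "real^'n \<Rightarrow> real"
  assumes "CARD('n) \<ge> 3"
    and "0 \<le> z" and "z < 1"
    and "continuous_on (sphere 0 1) f"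
    and "\<xi> \<in> sphere (0::real^'n) 1"
  shows "sph_transform k z f \<xi> = Nop k z (funk_radon k (Mop k z f)) \<xi>"
proof -
  define n where "n = CARD('n) - 2"
  define H where "H = (hausdorff_measure (real n) :: (real^'n) measure)"
  define X where "X = 1 - z\<^sup>2 * (\<xi> $ k)\<^sup>2"
  have n: "0 < n" "real CARD('n) - 2 = real n" unfolding n_def using assms(1) by auto
  have z: "\<bar>z\<bar> < 1" using assms(2,3) by simp
  have X: "0 < X" unfolding X_def by (rule sphere_gmap_denominator_pos[OF assms(5) z])
  have "Mop k z f = (\<lambda>\<eta>. conformal_factor k z \<eta> ^ n * f (hmap k z \<eta>))"
    unfolding Mop_def[abs_def] conformal_factor_def n_def ..
  then have "Nop k z (funk_radon k (Mop k z f)) \<xi> = X powr (- real n / 2)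
      * ((\<integral>\<eta>\<in>circ k z \<xi>. f \<eta> \<partial>H) / measure H (circ k 0 (gmap k z \<xi>)))"
    unfolding Nop_def funk_radon_def sph_transform_def Let_def n(2) H_def X_def
    using set_integral_circ_hmap[OF n(1) z assms(5,4)] by simp
  also have "\<dots> = (\<integral>\<eta>\<in>circ k z \<xi>. f \<eta> \<partial>H) / (sqrt X ^ n * measure H (circ k 0 (gmap k z \<xi>)))"
    unfolding powr_minus_half_of_nat[OF X] by simp
  also have "\<dots> = (\<integral>\<eta>\<in>circ k z \<xi>. f \<eta> \<partial>H) / measure H (circ k z \<xi>)"
    using measure_circ[OF n(1) z assms(5), of k, folded H_def] by (simp add: X_def)
  finally show ?thesis
    unfolding sph_transform_def Let_def n(2) H_def ..
qed

end
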